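(* Let $A<0<B$ be integers and let $\mu\in\mathcal M_0(\mathbb Z)$ satisfy $\mu([A,B])=1$, $\mu(\{A\})>0$, $\mu(\{B\})>0$. Define $$\mathcal R_\mu=\{\mathbf r\in[0,1]^{\mathbb Z}: r_i=1\text{ for } i\notin(A,B),\ \text{and } \mathbb P(S_{\tau(\mathbf r)}=i)\le\mu(\{i\})\text{ for } i\in(A,B)\}.$$ If $\mathbf r,\mathbf r'\in\mathcal R_\mu$, then $\tilde{\mathbf r}\in\mathcal R_\mu$, where $\tilde r_i=r_i\vee r'_i$ for all $i\in\mathbb Z$.
   Context: $S=(S_t)_{t\ge0}$ is a simple symmetric random walk on $\mathbb Z$ with $S_0=0$ (discrete time). $\mathcal M_0(\mathbb Z)$ is the set of probability measures on $\mathbb Z$ with finite first moment and mean zero. For $\mathbf r=(r_x)_{x\in\mathbb Z}\in[0,1]^{\mathbb Z}$, let $\{\xi_{t,x}\}_{t\ge0,x\in\mathbb Z}$ be Bernoulli random variables, mutually independent and independent of $S$, with $\mathbb P(\xi_{t,x}=0)=r_x=1-\mathbb P(\xi_{t,x}=1)$, and $\tau(\mathbf r):=\inf\{t\ge0:\xi_{t,S_t}=0\}$ (the law of $S_{\tau(\mathbf r)}$ depends only on $\mathbf r$). *)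

theory Defs
  imports "HOL-Probability.Probability"
begin

text \<open>Probability model: the first coordinate gives the steps of the simple symmetric
random walk (True = +1, False = -1, each with probability 1/2, i.i.d.); the second
coordinate gives the killing indicators: the component at (t,x) is True iff
xi_{t,x} = 0, which has probability r x.\<close>

definition rw_model :: "(int \<Rightarrow> real) \<Rightarrow> ((nat \<Rightarrow> bool) \<times> (nat \<times> int \<Rightarrow> bool)) measure" where
  "rw_model r =
     (\<Pi>\<^sub>M t\<in>(UNIV::nat set). measure_pmf (bernoulli_pmf (1/2)))
     \<Otimes>\<^sub>M (\<Pi>\<^sub>M tx\<in>(UNIV::(nat \<times> int) set). measure_pmf (bernoulli_pmf (r (snd tx))))"

definition rw_pos :: "(nat \<Rightarrow> bool) \<Rightarrow> nat \<Rightarrow> int" where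
  "rw_pos w t = (\<Sum>s<t. if w s then 1 else -1)"

text \<open>P(S_tau = i): tau is finite, equal to t, and S_t = i.\<close>
definition stop_prob :: "(int \<Rightarrow> real) \<Rightarrow> int \<Rightarrow> real" where
  "stop_prob r i = measure (rw_model r)
     {\<omega> \<in> space (rw_model r). \<exists>t.
        snd \<omega> (t, rw_pos (fst \<omega>) t) \<and>
        (\<forall>s<t. \<not> snd \<omega> (s, rw_pos (fst \<omega>) s)) \<and>
        rw_pos (fst \<omega>) t = i}"

definition R_mu :: "int pmf \<Rightarrow> int \<Rightarrow> int \<Rightarrow> (int \<Rightarrow> real) set" where
  "R_mu \<mu> A B = {r. (\<forall>x. 0 \<le> r x \<and> r x \<le> 1) \<and>
                     (\<forall>i. i \<notin> {A<..<B} \<longrightarrow> r i = 1) \<and>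
                     (\<forall>i\<in>{A<..<B}. stop_prob r i \<le> pmf \<mu> i)}"

end

theory Submission
  imports Defs
begin

text \<open>Conditionally on the path of the walk, the walk is killed for the first time at time \<open>t\<close>
at site \<open>i = S\<^sub>t\<close> with probability \<open>r\<^sub>i \<Prod>\<^sub>s\<^sub><\<^sub>t (1 - r\<^bsub>S\<^sub>s\<^esub>)\<close>. Raising \<open>r\<close> at sites other
than \<open>i\<close> therefore can only lower \<open>P(S\<^sub>\<tau> = i)\<close>. Since \<open>max r r'\<close> agrees at each site \<open>i\<close> with
one of \<open>r\<close>, \<open>r'\<close> and dominates it everywhere, the constraint at \<open>i\<close> is inherited from that one.\<close>

definition walk_measure :: "(nat \<Rightarrow> bool) measure" where
  "walk_measure = (\<Pi>\<^sub>M t\<in>(UNIV::nat set). measure_pmf (bernoulli_pmf (1/2)))"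

definition kill_measure :: "(int \<Rightarrow> real) \<Rightarrow> (nat \<times> int \<Rightarrow> bool) measure" where
  "kill_measure r = (\<Pi>\<^sub>M tx\<in>(UNIV::(nat \<times> int) set). measure_pmf (bernoulli_pmf (r (snd tx))))"

lemma space_walk_measure [simp]: "space walk_measure = UNIV"
  by (simp add: walk_measure_def space_PiM)

lemma space_kill_measure [simp]: "space (kill_measure r) = UNIV"
  by (simp add: kill_measure_def space_PiM)

lemma prob_space_walk_measure: "prob_space walk_measure"
  unfolding walk_measure_def by (rule prob_space_PiM) (rule prob_space_measure_pmf)

lemma prob_space_kill_measure: "prob_space (kill_measure r)"
  unfolding kill_measure_def by (rule prob_space_PiM) (rule prob_space_measure_pmf)

lemma rw_model_eq_pair_measure: "rw_model r = walk_measure \<Otimes>\<^sub>M kill_measure r"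
  by (simp add: rw_model_def walk_measure_def kill_measure_def)

definition stopped_at :: "int \<Rightarrow> ((nat \<Rightarrow> bool) \<times> (nat \<times> int \<Rightarrow> bool)) set" where
  "stopped_at i = {\<omega>. \<exists>t. snd \<omega> (t, rw_pos (fst \<omega>) t) \<and>
     (\<forall>s<t. \<not> snd \<omega> (s, rw_pos (fst \<omega>) s)) \<and> rw_pos (fst \<omega>) t = i}"

definition killed_first_at :: "(nat \<Rightarrow> bool) \<Rightarrow> int \<Rightarrow> nat \<Rightarrow> (nat \<times> int \<Rightarrow> bool) set" where
  "killed_first_at w i t = {k. k (t, rw_pos w t) \<and> (\<forall>s<t. \<not> k (s, rw_pos w s)) \<and> rw_pos w t = i}"

lemma stop_prob_eq_measure_stopped_at:
  "stop_prob r i = measure (walk_measure \<Otimes>\<^sub>M kill_measure r) (stopped_at i)"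
  by (simp add: stop_prob_def rw_model_eq_pair_measure stopped_at_def space_pair_measure)

lemma measurable_rw_pos: "Measurable.pred walk_measure (\<lambda>w. rw_pos w t = x)"
proof (induction t arbitrary: x)
  case 0
  then show ?case by (simp add: rw_pos_def)
next
  case (Suc t)
  have step: "Measurable.pred walk_measure (\<lambda>w. w t)"
    unfolding walk_measure_def by measurable
  have "(\<lambda>w. rw_pos w (Suc t) = x) =
        (\<lambda>w. (w t \<and> rw_pos w t = x - 1) \<or> (\<not> w t \<and> rw_pos w t = x + 1))"
    by (auto simp: rw_pos_def)
  then show ?case using step Suc by simp
qed

lemma stopped_at_measurable: "stopped_at i \<in> sets (walk_measure \<Otimes>\<^sub>M kill_measure r)"
proof -
  have pos: "Measurable.pred (walk_measure \<Otimes>\<^sub>M kill_measure r) (\<lambda>\<omega>. rw_pos (fst \<omega>) t = x)" for t x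
    using measurable_rw_pos[of t x] by measurable
  have kill: "Measurable.pred (walk_measure \<Otimes>\<^sub>M kill_measure r) (\<lambda>\<omega>. snd \<omega> tx)" for tx
    unfolding kill_measure_def by measurable
  \<comment> \<open>the killing indicator is read at a random site, so quantify over the site explicitly\<close>
  have "Measurable.pred (walk_measure \<Otimes>\<^sub>M kill_measure r)
    (\<lambda>\<omega>. \<exists>t. (\<exists>x. rw_pos (fst \<omega>) t = x \<and> snd \<omega> (t, x)) \<and>
       (\<forall>s<t. \<not> (\<exists>x. rw_pos (fst \<omega>) s = x \<and> snd \<omega> (s, x))) \<and> rw_pos (fst \<omega>) t = i)"
    using pos kill by measurable
  then show ?thesis
    by (simp add: pred_def stopped_at_def space_pair_measure)
qed

lemma Pair_vimage_stopped_at: "Pair w -` stopped_at i = (\<Union>t. killed_first_at w i t)"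
  by (auto simp: stopped_at_def killed_first_at_def)

lemma disjoint_family_killed_first_at: "disjoint_family (killed_first_at w i)"
  unfolding disjoint_family_on_def killed_first_at_def
  by (auto dest: not_less_iff_gr_or_eq[THEN iffD1])

lemma killed_first_at_eq_prod_emb:
  assumes "rw_pos w t = i"
  shows "killed_first_at w i t =
    prod_emb UNIV (\<lambda>tx. measure_pmf (bernoulli_pmf (r (snd tx)))) ((\<lambda>s. (s, rw_pos w s)) ` {..t})
      (\<Pi>\<^sub>E j\<in>(\<lambda>s. (s, rw_pos w s)) ` {..t}. if fst j = t then {True} else {False})"
proof -
  have "(\<forall>s\<in>{..t}. k (s, rw_pos w s) \<in> (if s = t then {True} else {False})) \<longleftrightarrow>
        k (t, rw_pos w t) \<and> (\<forall>s<t. \<not> k (s, rw_pos w s))" for k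
    by (auto simp: less_le)
  then show ?thesis
    using assms by (auto simp: killed_first_at_def prod_emb_def space_PiM PiE_iff)
qed

lemma killed_first_at_measurable: "killed_first_at w i t \<in> sets (kill_measure r)"
proof (cases "rw_pos w t = i")
  case True
  show ?thesis
    unfolding killed_first_at_eq_prod_emb[OF True, where r = r] kill_measure_def
    by (rule sets_PiM_I) auto
qed (simp add: killed_first_at_def)

lemma emeasure_killed_first_at:
  assumes r01: "\<And>x. 0 \<le> r x \<and> r x \<le> 1"
  shows "emeasure (kill_measure r) (killed_first_at w i t) =
    ennreal (if rw_pos w t = i then r i * (\<Prod>s<t. 1 - r (rw_pos w s)) else 0)"
proof (cases "rw_pos w t = i")
  case True
  let ?p = "\<lambda>s. (s, rw_pos w s)"
  let ?X = "\<lambda>j::nat \<times> int. if fst j = t then {True} else {False}"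
  let ?e = "\<lambda>j. emeasure (measure_pmf (bernoulli_pmf (r (snd j)))) (?X j)"
  have "emeasure (kill_measure r) (killed_first_at w i t) = (\<Prod>j\<in>?p ` {..t}. ?e j)"
    unfolding killed_first_at_eq_prod_emb[OF True, where r = r] kill_measure_def
    by (rule emeasure_PiM_emb) (auto intro: prob_space_measure_pmf)
  also have "\<dots> = (\<Prod>s\<le>t. ?e (?p s))"
    by (simp add: prod.reindex inj_on_def)
  also have "\<dots> = ?e (?p t) * (\<Prod>s<t. ?e (?p s))"
    by (simp add: lessThan_Suc_atMost[symmetric] mult.commute)
  also have "\<dots> = ennreal (r i) * (\<Prod>s<t. ennreal (1 - r (rw_pos w s)))"
    using True r01 by (simp add: emeasure_pmf_single)
  finally show ?thesis
    using True r01 by (simp add: ennreal_mult' prod_ennreal prod_nonneg)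
qed (simp add: killed_first_at_def)

lemma stop_prob_antimono:
  assumes r01: "\<And>x. 0 \<le> r x \<and> r x \<le> 1" and r'01: "\<And>x. 0 \<le> r' x \<and> r' x \<le> 1"
    and le: "\<And>x. r x \<le> r' x" and eq: "r' i = r i"
  shows "stop_prob r' i \<le> stop_prob r i"
proof -
  interpret W: prob_space walk_measure by (rule prob_space_walk_measure)
  interpret K: prob_space "kill_measure q" for q by (rule prob_space_kill_measure)
  interpret P: pair_prob_space walk_measure "kill_measure q" for q by unfold_locales
  have slice: "emeasure (kill_measure q) (Pair w -` stopped_at i) =
      (\<Sum>t. emeasure (kill_measure q) (killed_first_at w i t))" for q w
    unfolding Pair_vimage_stopped_at
    by (rule suminf_emeasure[symmetric])
       (auto simp: killed_first_at_measurable disjoint_family_killed_first_at)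
  have "emeasure (kill_measure r') (killed_first_at w i t) \<le>
        emeasure (kill_measure r) (killed_first_at w i t)" for w t
    using r01 r'01 le eq
    by (auto simp: emeasure_killed_first_at intro!: ennreal_leI mult_left_mono prod_mono)
  then have "emeasure (kill_measure r') (Pair w -` stopped_at i) \<le>
             emeasure (kill_measure r) (Pair w -` stopped_at i)" for w
    by (simp add: slice suminf_le)
  then have "emeasure (walk_measure \<Otimes>\<^sub>M kill_measure r') (stopped_at i) \<le>
             emeasure (walk_measure \<Otimes>\<^sub>M kill_measure r) (stopped_at i)"
    by (simp add: K.emeasure_pair_measure_alt[OF stopped_at_measurable] nn_integral_mono)
  then show ?thesis
    by (simp add: stop_prob_eq_measure_stopped_at P.emeasure_eq_measure)
qed

theorem lemma1:
  fixes \<mu> :: "int pmf" and A B :: int and r r' :: "int \<Rightarrow> real"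
  assumes "A < 0" and "0 < B"
    and "integrable (measure_pmf \<mu>) real_of_int"
    and "measure_pmf.expectation \<mu> real_of_int = 0"
    and "measure_pmf.prob \<mu> {A..B} = 1"
    and "pmf \<mu> A > 0" and "pmf \<mu> B > 0"
    and "r \<in> R_mu \<mu> A B" and "r' \<in> R_mu \<mu> A B"
  shows "(\<lambda>i. max (r i) (r' i)) \<in> R_mu \<mu> A B"
proof -
  let ?m = "\<lambda>i. max (r i) (r' i)"
  have r: "\<And>x. 0 \<le> r x \<and> r x \<le> 1" "\<And>i. i \<in> {A<..<B} \<Longrightarrow> stop_prob r i \<le> pmf \<mu> i"
   and r': "\<And>x. 0 \<le> r' x \<and> r' x \<le> 1" "\<And>i. i \<in> {A<..<B} \<Longrightarrow> stop_prob r' i \<le> pmf \<mu> i"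
    using \<open>r \<in> R_mu \<mu> A B\<close> \<open>r' \<in> R_mu \<mu> A B\<close> by (auto simp: R_mu_def)
  have m01: "\<And>x. 0 \<le> ?m x \<and> ?m x \<le> 1"
    using r(1) r'(1) by (simp add: le_max_iff_disj)
  have "stop_prob ?m i \<le> pmf \<mu> i" if i: "i \<in> {A<..<B}" for i
  proof (cases "r' i \<le> r i")
    case True
    then have "stop_prob ?m i \<le> stop_prob r i"
      by (intro stop_prob_antimono) (use r(1) m01 in auto)
    then show ?thesis using r(2)[OF i] by linarith
  next
    case False
    then have "stop_prob ?m i \<le> stop_prob r' i"
      by (intro stop_prob_antimono) (use r'(1) m01 in auto)
    then show ?thesis using r'(2)[OF i] by linarith
  qed
  then show ?thesis
    using m01 \<open>r \<in> R_mu \<mu> A B\<close> \<open>r' \<in> R_mu \<mu> A B\<close> by (auto simp: R_mu_def)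
qed

end
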